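(* Let $\mathcal{C}$ be a category with finite products and an exponentiable parametrised natural numbers object $N$. (1) Every iterative midpoint object $(A,m)$ is a supermidpoint object under its associated infinitary operation $M$ (the unique $M\colon A^N\to A$ with $M_i\,x_i=m(x_0,M_i\,x_{i+1})$), and if $(A,m)$ is cancellative then so is this supermidpoint object. (2) Every cancellative supermidpoint object $(A,M)$ is an m-convex body under its associated binary operation $m(x,y)=M(x,y,y,y,\dots)$.
   Context: Equations are between generalised elements; $M_i\,x_i$ denotes $M((x_i))$. A midpoint object is $(A,m)$ with $m\colon A\times A\to A$ satisfying $m(x,x)=x$, $m(x,y)=m(y,x)$, $m(m(x,y),m(z,w))=m(m(x,z),m(y,w))$; it is cancellative if $m(x,y)=m(x,z)$ implies $y=z$; it is iterative if for every map $c\colon X\to A\times X$ there is a unique $u\colon X\to A$ with $m\circ(\mathrm{id}\times u)\circ c=u$. An m-convex body is a cancellative iterative midpoint object. A supermidpoint object is an object $A$ with $M\colon A^N\to A$ satisfying: $M(x,x,x,\dots)=x$; $M(x,y,y,y,\dots)=M(y,x,x,x,\dots)$; $M_i M_j\,x_{ij}=M_j M_i\,x_{ij}$; and $M_i\,x_i=M(x_0, M_i x_{i+1}, M_i x_{i+1},\dots)$. It is cancellative if the binary operation $m(x,y)=M(x,y,y,y,\dots)$ satisfies cancellation. *)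

theory Defs
  imports Main
begin

text \<open>A category is given by a set of objects, a set of arrows, domain/codomain,
identities and composition (ccomp g f means g after f).  The finite-product
structure (terminal object, binary products), the parametrised natural numbers
object N and the exponentials A^N are given as chosen data, and the axioms below
assert their universal properties (existence and uniqueness).\<close>

record ('o, 'a) fpcat =
  cOb   :: "'o set"
  cAr   :: "'a set"
  cdom  :: "'a \<Rightarrow> 'o"
  ccod  :: "'a \<Rightarrow> 'o"
  cid   :: "'o \<Rightarrow> 'a"
  ccomp :: "'a \<Rightarrow> 'a \<Rightarrow> 'a"
  cterm :: "'o"
  cbang :: "'o \<Rightarrow> 'a"
  cprod :: "'o \<Rightarrow> 'o \<Rightarrow> 'o"
  cpr1  :: "'o \<Rightarrow> 'o \<Rightarrow> 'a"
  cpr2  :: "'o \<Rightarrow> 'o \<Rightarrow> 'a"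
  cpair :: "'a \<Rightarrow> 'a \<Rightarrow> 'a"
  cnat  :: "'o"
  czero :: "'a"
  csucc :: "'a"
  crec  :: "'a \<Rightarrow> 'a \<Rightarrow> 'a"
  cexp  :: "'o \<Rightarrow> 'o"
  cev   :: "'o \<Rightarrow> 'a"
  clam  :: "'o \<Rightarrow> 'a \<Rightarrow> 'a"

definition arr :: "('o,'a) fpcat \<Rightarrow> 'o \<Rightarrow> 'o \<Rightarrow> 'a set" where
  "arr C X Y = {f \<in> cAr C. cdom C f = X \<and> ccod C f = Y}"

definition cross :: "('o,'a) fpcat \<Rightarrow> 'a \<Rightarrow> 'a \<Rightarrow> 'a" where
  "cross C f g = cpair C (ccomp C f (cpr1 C (cdom C f) (cdom C g)))
                         (ccomp C g (cpr2 C (cdom C f) (cdom C g)))"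

definition is_category :: "('o,'a) fpcat \<Rightarrow> bool" where
  "is_category C \<longleftrightarrow>
     (\<forall>f\<in>cAr C. cdom C f \<in> cOb C \<and> ccod C f \<in> cOb C) \<and>
     (\<forall>A\<in>cOb C. cid C A \<in> arr C A A) \<and>
     (\<forall>X\<in>cOb C. \<forall>Y\<in>cOb C. \<forall>Z\<in>cOb C. \<forall>f\<in>arr C X Y. \<forall>g\<in>arr C Y Z.
         ccomp C g f \<in> arr C X Z) \<and>
     (\<forall>X\<in>cOb C. \<forall>Y\<in>cOb C. \<forall>f\<in>arr C X Y.
         ccomp C (cid C Y) f = f \<and> ccomp C f (cid C X) = f) \<and>
     (\<forall>W\<in>cOb C. \<forall>X\<in>cOb C. \<forall>Y\<in>cOb C. \<forall>Z\<in>cOb C.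
       \<forall>f\<in>arr C W X. \<forall>g\<in>arr C X Y. \<forall>h\<in>arr C Y Z.
         ccomp C h (ccomp C g f) = ccomp C (ccomp C h g) f)"

definition has_terminal :: "('o,'a) fpcat \<Rightarrow> bool" where
  "has_terminal C \<longleftrightarrow> cterm C \<in> cOb C \<and>
     (\<forall>X\<in>cOb C. cbang C X \<in> arr C X (cterm C) \<and>
        (\<forall>f\<in>arr C X (cterm C). f = cbang C X))"

definition has_products :: "('o,'a) fpcat \<Rightarrow> bool" where
  "has_products C \<longleftrightarrow>
     (\<forall>A\<in>cOb C. \<forall>B\<in>cOb C.
        cprod C A B \<in> cOb C \<and>
        cpr1 C A B \<in> arr C (cprod C A B) A \<and>
        cpr2 C A B \<in> arr C (cprod C A B) B \<and>
        (\<forall>X\<in>cOb C. \<forall>f\<in>arr C X A. \<forall>g\<in>arr C X B.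
           cpair C f g \<in> arr C X (cprod C A B) \<and>
           ccomp C (cpr1 C A B) (cpair C f g) = f \<and>
           ccomp C (cpr2 C A B) (cpair C f g) = g) \<and>
        (\<forall>X\<in>cOb C. \<forall>h\<in>arr C X (cprod C A B).
           h = cpair C (ccomp C (cpr1 C A B) h) (ccomp C (cpr2 C A B) h)))"

definition has_param_nno :: "('o,'a) fpcat \<Rightarrow> bool" where
  "has_param_nno C \<longleftrightarrow>
     cnat C \<in> cOb C \<and> czero C \<in> arr C (cterm C) (cnat C) \<and>
     csucc C \<in> arr C (cnat C) (cnat C) \<and>
     (\<forall>X\<in>cOb C. \<forall>Y\<in>cOb C. \<forall>f\<in>arr C X Y. \<forall>g\<in>arr C Y Y.
        crec C f g \<in> arr C (cprod C X (cnat C)) Y \<and>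
        ccomp C (crec C f g) (cpair C (cid C X) (ccomp C (czero C) (cbang C X))) = f \<and>
        ccomp C (crec C f g) (cross C (cid C X) (csucc C)) = ccomp C g (crec C f g) \<and>
        (\<forall>h\<in>arr C (cprod C X (cnat C)) Y.
           ccomp C h (cpair C (cid C X) (ccomp C (czero C) (cbang C X))) = f \<and>
           ccomp C h (cross C (cid C X) (csucc C)) = ccomp C g h
           \<longrightarrow> h = crec C f g))"

definition nno_exponentiable :: "('o,'a) fpcat \<Rightarrow> bool" where
  "nno_exponentiable C \<longleftrightarrow>
     (\<forall>A\<in>cOb C.
        cexp C A \<in> cOb C \<and>
        cev C A \<in> arr C (cprod C (cexp C A) (cnat C)) A \<and>
        (\<forall>X\<in>cOb C. \<forall>f\<in>arr C (cprod C X (cnat C)) A.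
           clam C X f \<in> arr C X (cexp C A) \<and>
           ccomp C (cev C A) (cross C (clam C X f) (cid C (cnat C))) = f \<and>
           (\<forall>g\<in>arr C X (cexp C A).
              ccomp C (cev C A) (cross C g (cid C (cnat C))) = f \<longrightarrow> g = clam C X f)))"

definition fp_nno_cat :: "('o,'a) fpcat \<Rightarrow> bool" where
  "fp_nno_cat C \<longleftrightarrow> is_category C \<and> has_terminal C \<and> has_products C \<and>
     has_param_nno C \<and> nno_exponentiable C"

abbreviation mid :: "('o,'a) fpcat \<Rightarrow> 'a \<Rightarrow> 'a \<Rightarrow> 'a \<Rightarrow> 'a" where
  "mid C m x y \<equiv> ccomp C m (cpair C x y)"

definition midpoint_obj :: "('o,'a) fpcat \<Rightarrow> 'o \<Rightarrow> 'a \<Rightarrow> bool" where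
  "midpoint_obj C A m \<longleftrightarrow> A \<in> cOb C \<and> m \<in> arr C (cprod C A A) A \<and>
     (\<forall>X\<in>cOb C. \<forall>x\<in>arr C X A. \<forall>y\<in>arr C X A. \<forall>z\<in>arr C X A. \<forall>w\<in>arr C X A.
        mid C m x x = x \<and>
        mid C m x y = mid C m y x \<and>
        mid C m (mid C m x y) (mid C m z w) = mid C m (mid C m x z) (mid C m y w))"

definition cancellative :: "('o,'a) fpcat \<Rightarrow> 'o \<Rightarrow> 'a \<Rightarrow> bool" where
  "cancellative C A m \<longleftrightarrow>
     (\<forall>X\<in>cOb C. \<forall>x\<in>arr C X A. \<forall>y\<in>arr C X A. \<forall>z\<in>arr C X A.
        mid C m x y = mid C m x z \<longrightarrow> y = z)"

definition iterative :: "('o,'a) fpcat \<Rightarrow> 'o \<Rightarrow> 'a \<Rightarrow> bool" where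
  "iterative C A m \<longleftrightarrow>
     (\<forall>X\<in>cOb C. \<forall>c\<in>arr C X (cprod C A X).
        \<exists>!u. u \<in> arr C X A \<and> ccomp C m (ccomp C (cross C (cid C A) u) c) = u)"

definition iterative_midpoint :: "('o,'a) fpcat \<Rightarrow> 'o \<Rightarrow> 'a \<Rightarrow> bool" where
  "iterative_midpoint C A m \<longleftrightarrow> midpoint_obj C A m \<and> iterative C A m"

definition m_convex_body :: "('o,'a) fpcat \<Rightarrow> 'o \<Rightarrow> 'a \<Rightarrow> bool" where
  "m_convex_body C A m \<longleftrightarrow> midpoint_obj C A m \<and> cancellative C A m \<and> iterative C A m"

definition seq_const :: "('o,'a) fpcat \<Rightarrow> 'o \<Rightarrow> 'o \<Rightarrow> 'a \<Rightarrow> 'a" where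
  "seq_const C X A x = clam C X (ccomp C x (cpr1 C X (cnat C)))"

text \<open>The sequence (x,y,y,y,...) for x y : X \<rightarrow> A, defined by parametrised recursion
with state in A \<times> A: start at (x,y), step (a,b) \<mapsto> (b,b), output the first component.\<close>
definition seq_xy :: "('o,'a) fpcat \<Rightarrow> 'o \<Rightarrow> 'o \<Rightarrow> 'a \<Rightarrow> 'a \<Rightarrow> 'a" where
  "seq_xy C X A x y = clam C X (ccomp C (cpr1 C A A)
      (crec C (cpair C x y) (cpair C (cpr2 C A A) (cpr2 C A A))))"

definition seq_head :: "('o,'a) fpcat \<Rightarrow> 'o \<Rightarrow> 'o \<Rightarrow> 'a \<Rightarrow> 'a" where
  "seq_head C X A x = ccomp C (cev C A) (cpair C x (ccomp C (czero C) (cbang C X)))"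

definition seq_shift :: "('o,'a) fpcat \<Rightarrow> 'o \<Rightarrow> 'o \<Rightarrow> 'a \<Rightarrow> 'a" where
  "seq_shift C X A x = clam C X (ccomp C (cev C A) (cross C x (csucc C)))"

text \<open>For x : X \<rightarrow> (A^N)^N, the double sequence x_ij as a map (X \<times> N) \<times> N \<rightarrow> A
(first N-coordinate i, second j).\<close>
definition dseq :: "('o,'a) fpcat \<Rightarrow> 'o \<Rightarrow> 'a \<Rightarrow> 'a" where
  "dseq C A x = ccomp C (cev C A)
     (cross C (ccomp C (cev C (cexp C A)) (cross C x (cid C (cnat C)))) (cid C (cnat C)))"

definition swapN :: "('o,'a) fpcat \<Rightarrow> 'o \<Rightarrow> 'a" where
  "swapN C X = (let N = cnat C; XN = cprod C X N in
     cpair C (cpair C (ccomp C (cpr1 C X N) (cpr1 C XN N)) (cpr2 C XN N))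
             (ccomp C (cpr2 C X N) (cpr1 C XN N)))"

definition supermidpoint :: "('o,'a) fpcat \<Rightarrow> 'o \<Rightarrow> 'a \<Rightarrow> bool" where
  "supermidpoint C A M \<longleftrightarrow> A \<in> cOb C \<and> M \<in> arr C (cexp C A) A \<and>
     (\<forall>X\<in>cOb C.
        (\<forall>x\<in>arr C X A. ccomp C M (seq_const C X A x) = x) \<and>
        (\<forall>x\<in>arr C X A. \<forall>y\<in>arr C X A.
           ccomp C M (seq_xy C X A x y) = ccomp C M (seq_xy C X A y x)) \<and>
        (\<forall>x\<in>arr C X (cexp C (cexp C A)).
           ccomp C M (clam C X (ccomp C M (clam C (cprod C X (cnat C)) (dseq C A x)))) =
           ccomp C M (clam C X (ccomp C M (clam C (cprod C X (cnat C))
                                    (ccomp C (dseq C A x) (swapN C X)))))) \<and>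
        (\<forall>x\<in>arr C X (cexp C A).
           ccomp C M x = ccomp C M (seq_xy C X A (seq_head C X A x)
                                         (ccomp C M (seq_shift C X A x)))))"

definition supermid_binop :: "('o,'a) fpcat \<Rightarrow> 'o \<Rightarrow> 'a \<Rightarrow> 'a" where
  "supermid_binop C A M = ccomp C M (seq_xy C (cprod C A A) A (cpr1 C A A) (cpr2 C A A))"

definition cancellative_supermidpoint :: "('o,'a) fpcat \<Rightarrow> 'o \<Rightarrow> 'a \<Rightarrow> bool" where
  "cancellative_supermidpoint C A M \<longleftrightarrow>
     supermidpoint C A M \<and> cancellative C A (supermid_binop C A M)"

definition assoc_inf_op :: "('o,'a) fpcat \<Rightarrow> 'o \<Rightarrow> 'a \<Rightarrow> 'a \<Rightarrow> bool" where
  "assoc_inf_op C A m M \<longleftrightarrow> M \<in> arr C (cexp C A) A \<and>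
     (\<forall>X\<in>cOb C. \<forall>x\<in>arr C X (cexp C A).
        ccomp C M x = mid C m (seq_head C X A x) (ccomp C M (seq_shift C X A x)))"

end

theory Submission
  imports Defs
begin

text \<open>
  (1) Since \<open>m\<close> is iterative, the recursion \<open>M x = m(x\<^sub>0, M (shift x))\<close> has exactly one
  solution on the generic sequence.  Each supermidpoint law is then proved by exhibiting both of
  its sides as fixed points of one map \<open>u \<mapsto> m(a, u \<cdot> e)\<close>, using idempotence, commutativity
  and mediality of \<open>m\<close>; iterativity makes such fixed points unique.

  (2) Conversely, \<open>m(x, y) = M(x, y, y, \<dots>)\<close> inherits idempotence and commutativity directly.
  The exchange law \<open>M\<^sub>i M\<^sub>j = M\<^sub>j M\<^sub>i\<close>, applied to the double sequence with rows
  \<open>(p\<^sub>i, q\<^sub>i, q\<^sub>i, \<dots>)\<close>, shows that \<open>M\<close> commutes with \<open>m\<close>, and mediality follows.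
  For iterativity, given \<open>a : Z \<rightarrow> A\<close> and \<open>e : Z \<rightarrow> Z\<close>, \<open>M\<close> of the orbit sequence
  \<open>(a, a e, a e\<^sup>2, \<dots>)\<close> is a fixed point of \<open>u \<mapsto> m(a, u \<cdot> e)\<close>; any other fixed point \<open>u\<close>
  agrees with it by cancellation, because \<open>M (u, u e, u e\<^sup>2, \<dots>)\<close> can be computed both at its
  head and termwise.
\<close>

locale fp_nno_category =
  fixes C :: "('o,'a) fpcat"
  assumes fp_nno_cat: "fp_nno_cat C"
begin

abbreviation "Ob \<equiv> cOb C"
abbreviation ar where "ar f \<equiv> f \<in> cAr C"
abbreviation "dm \<equiv> cdom C"
abbreviation "cd \<equiv> ccod C"
abbreviation comp (infixr "\<cdot>" 55) where "g \<cdot> f \<equiv> ccomp C g f"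
abbreviation "idc \<equiv> cid C"
abbreviation "pair \<equiv> cpair C"
abbreviation "pr1 \<equiv> cpr1 C"
abbreviation "pr2 \<equiv> cpr2 C"
abbreviation "prd \<equiv> cprod C"
abbreviation "tm \<equiv> cterm C"
abbreviation "bang \<equiv> cbang C"
abbreviation "NN \<equiv> cnat C"
abbreviation "zero \<equiv> czero C"
abbreviation "succ \<equiv> csucc C"
abbreviation "rec \<equiv> crec C"
abbreviation "ex \<equiv> cexp C"
abbreviation "ev \<equiv> cev C"
abbreviation "lam \<equiv> clam C"

lemma category: "is_category C"
  and terminal: "has_terminal C"
  and products: "has_products C"
  and param_nno: "has_param_nno C"
  and exponentiable: "nno_exponentiable C"
  using fp_nno_cat unfolding fp_nno_cat_def by auto

declare cross_def [simp]

lemma dom_ob [simp]: "ar f \<Longrightarrow> dm f \<in> Ob"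
  and cod_ob [simp]: "ar f \<Longrightarrow> cd f \<in> Ob"
  using category unfolding is_category_def by auto

lemma id_in_arr: "A \<in> Ob \<Longrightarrow> idc A \<in> arr C A A"
  and comp_in_arr: "X \<in> Ob \<Longrightarrow> Y \<in> Ob \<Longrightarrow> Z \<in> Ob \<Longrightarrow> f \<in> arr C X Y \<Longrightarrow> g \<in> arr C Y Z \<Longrightarrow>
    g \<cdot> f \<in> arr C X Z"
  and id_comp: "X \<in> Ob \<Longrightarrow> Y \<in> Ob \<Longrightarrow> f \<in> arr C X Y \<Longrightarrow> idc Y \<cdot> f = f \<and> f \<cdot> idc X = f"
  and assoc_in_arr: "W \<in> Ob \<Longrightarrow> X \<in> Ob \<Longrightarrow> Y \<in> Ob \<Longrightarrow> Z \<in> Ob \<Longrightarrow>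
    f \<in> arr C W X \<Longrightarrow> g \<in> arr C X Y \<Longrightarrow> h \<in> arr C Y Z \<Longrightarrow> h \<cdot> (g \<cdot> f) = (h \<cdot> g) \<cdot> f"
  using category unfolding is_category_def by blast+

(* An arrow f : X \<rightarrow> Y is handled as the three facts ar f, dm f = X, cd f = Y, so that the
   simplifier can discharge the typing side conditions of the rewrite rules below. *)
lemma id_ar [simp]:
  assumes "A \<in> Ob"
  shows "ar (idc A)" "dm (idc A) = A" "cd (idc A) = A"
  using id_in_arr[OF assms] by (auto simp: arr_def)

lemma comp_ar [simp]:
  assumes "ar f" "ar g" "dm g = cd f"
  shows "ar (g \<cdot> f)" "dm (g \<cdot> f) = dm f" "cd (g \<cdot> f) = cd g"
proof -
  have "g \<cdot> f \<in> arr C (dm f) (cd g)"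
    using assms by (intro comp_in_arr[where Y = "cd f"]) (auto simp: arr_def)
  then show "ar (g \<cdot> f)" "dm (g \<cdot> f) = dm f" "cd (g \<cdot> f) = cd g"
    by (auto simp: arr_def)
qed

lemma id_left [simp]: "ar f \<Longrightarrow> cd f = A \<Longrightarrow> idc A \<cdot> f = f"
  and id_right [simp]: "ar f \<Longrightarrow> dm f = A \<Longrightarrow> f \<cdot> idc A = f"
  using id_comp[of "dm f" "cd f" f] by (auto simp: arr_def)

lemma comp_assoc [simp]:
  assumes "ar f" "ar g" "ar h" "dm g = cd f" "dm h = cd g"
  shows "(h \<cdot> g) \<cdot> f = h \<cdot> (g \<cdot> f)"
  using assoc_in_arr[of "dm f" "cd f" "cd g" "cd h" f g h] assms by (auto simp: arr_def)

lemma product: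
  assumes "A \<in> Ob" "B \<in> Ob"
  shows "prd A B \<in> Ob \<and> pr1 A B \<in> arr C (prd A B) A \<and> pr2 A B \<in> arr C (prd A B) B \<and>
        (\<forall>X\<in>Ob. \<forall>f\<in>arr C X A. \<forall>g\<in>arr C X B.
           pair f g \<in> arr C X (prd A B) \<and> pr1 A B \<cdot> pair f g = f \<and> pr2 A B \<cdot> pair f g = g) \<and>
        (\<forall>X\<in>Ob. \<forall>h\<in>arr C X (prd A B). h = pair (pr1 A B \<cdot> h) (pr2 A B \<cdot> h))"
  using products assms unfolding has_products_def by blast

lemma prod_ob [simp]: "A \<in> Ob \<Longrightarrow> B \<in> Ob \<Longrightarrow> prd A B \<in> Ob"
  using product by blast

lemma pr1_ar [simp]:
    "A \<in> Ob \<Longrightarrow> B \<in> Ob \<Longrightarrow> ar (pr1 A B)"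
    "A \<in> Ob \<Longrightarrow> B \<in> Ob \<Longrightarrow> dm (pr1 A B) = prd A B"
    "A \<in> Ob \<Longrightarrow> B \<in> Ob \<Longrightarrow> cd (pr1 A B) = A"
  and pr2_ar [simp]:
    "A \<in> Ob \<Longrightarrow> B \<in> Ob \<Longrightarrow> ar (pr2 A B)"
    "A \<in> Ob \<Longrightarrow> B \<in> Ob \<Longrightarrow> dm (pr2 A B) = prd A B"
    "A \<in> Ob \<Longrightarrow> B \<in> Ob \<Longrightarrow> cd (pr2 A B) = B"
  using product unfolding arr_def by blast+

lemma pairing:
  assumes "ar f" "ar g" "dm f = dm g"
  shows "pair f g \<in> arr C (dm f) (prd (cd f) (cd g))"
    "pr1 (cd f) (cd g) \<cdot> pair f g = f" "pr2 (cd f) (cd g) \<cdot> pair f g = g"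
proof -
  have f: "f \<in> arr C (dm f) (cd f)" and g: "g \<in> arr C (dm f) (cd g)"
    using assms by (auto simp: arr_def)
  have "\<forall>X\<in>Ob. \<forall>u\<in>arr C X (cd f). \<forall>v\<in>arr C X (cd g).
      pair u v \<in> arr C X (prd (cd f) (cd g)) \<and>
      pr1 (cd f) (cd g) \<cdot> pair u v = u \<and> pr2 (cd f) (cd g) \<cdot> pair u v = v"
    using product[of "cd f" "cd g"] assms by simp
  from this[rule_format, OF _ f g] assms
  show "pair f g \<in> arr C (dm f) (prd (cd f) (cd g))"
    "pr1 (cd f) (cd g) \<cdot> pair f g = f" "pr2 (cd f) (cd g) \<cdot> pair f g = g"
    by auto
qed

lemma pair_ar [simp]:
  assumes "ar f" "ar g" "dm f = dm g"
  shows "ar (pair f g)" "dm (pair f g) = dm f" "cd (pair f g) = prd (cd f) (cd g)"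
  using pairing(1)[OF assms] by (auto simp: arr_def)

lemma pr1_pair [simp]:
    "ar f \<Longrightarrow> ar g \<Longrightarrow> dm f = dm g \<Longrightarrow> cd f = A \<Longrightarrow> cd g = B \<Longrightarrow> pr1 A B \<cdot> pair f g = f"
  and pr2_pair [simp]:
    "ar f \<Longrightarrow> ar g \<Longrightarrow> dm f = dm g \<Longrightarrow> cd f = A \<Longrightarrow> cd g = B \<Longrightarrow> pr2 A B \<cdot> pair f g = g"
  using pairing by blast+

lemma pair_eta [simp]:
  assumes "ar h" "cd h = prd A B" "A \<in> Ob" "B \<in> Ob"
  shows "pair (pr1 A B \<cdot> h) (pr2 A B \<cdot> h) = h"
proof -
  have "h \<in> arr C (dm h) (prd A B)"
    using assms by (simp add: arr_def)
  then show ?thesis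
    using product[OF assms(3,4)] dom_ob[OF assms(1)] by metis
qed

lemma pair_comp [simp]:
  assumes "ar f" "ar g" "dm f = dm g" "ar h" "cd h = dm f"
  shows "pair f g \<cdot> h = pair (f \<cdot> h) (g \<cdot> h)"
proof -
  have "pair f g \<cdot> h = pair (pr1 (cd f) (cd g) \<cdot> (pair f g \<cdot> h)) (pr2 (cd f) (cd g) \<cdot> (pair f g \<cdot> h))"
    using assms by (intro pair_eta[symmetric]) auto
  also have "\<dots> = pair (f \<cdot> h) (g \<cdot> h)"
    using assms by (simp flip: comp_assoc)
  finally show ?thesis .
qed

lemma pair_pr [simp]: "A \<in> Ob \<Longrightarrow> B \<in> Ob \<Longrightarrow> pair (pr1 A B) (pr2 A B) = idc (prd A B)"
  using pair_eta[of "idc (prd A B)" A B] by simp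

lemma term_ob [simp]: "tm \<in> Ob"
  and bang_ar [simp]: "X \<in> Ob \<Longrightarrow> ar (bang X)" "X \<in> Ob \<Longrightarrow> dm (bang X) = X"
    "X \<in> Ob \<Longrightarrow> cd (bang X) = tm"
  using terminal unfolding has_terminal_def arr_def by blast+

lemma bang_unique: "ar f \<Longrightarrow> cd f = tm \<Longrightarrow> f = bang (dm f)"
  using terminal dom_ob unfolding has_terminal_def arr_def by blast

lemma bang_comp [simp]: "ar h \<Longrightarrow> cd h = X \<Longrightarrow> bang X \<cdot> h = bang (dm h)"
  using bang_unique[of "bang X \<cdot> h"] by auto

lemma nat_ob [simp]: "NN \<in> Ob"
  and zero_ar [simp]: "ar zero" "dm zero = tm" "cd zero = NN"
  and succ_ar [simp]: "ar succ" "dm succ = NN" "cd succ = NN"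
  using param_nno unfolding has_param_nno_def arr_def by blast+

lemma recursion:
  assumes "ar f" "ar g" "dm g = cd f" "cd g = cd f"
  shows "rec f g \<in> arr C (prd (dm f) NN) (cd f) \<and>
        rec f g \<cdot> pair (idc (dm f)) (zero \<cdot> bang (dm f)) = f \<and>
        rec f g \<cdot> pair (pr1 (dm f) NN) (succ \<cdot> pr2 (dm f) NN) = g \<cdot> rec f g \<and>
        (\<forall>h\<in>arr C (prd (dm f) NN) (cd f).
           h \<cdot> pair (idc (dm f)) (zero \<cdot> bang (dm f)) = f \<and>
           h \<cdot> pair (pr1 (dm f) NN) (succ \<cdot> pr2 (dm f) NN) = g \<cdot> h
           \<longrightarrow> h = rec f g)"
proof -
  have f: "f \<in> arr C (dm f) (cd f)" and g: "g \<in> arr C (cd f) (cd f)"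
    using assms by (auto simp: arr_def)
  have "\<forall>X\<in>Ob. \<forall>Y\<in>Ob. \<forall>f\<in>arr C X Y. \<forall>g\<in>arr C Y Y.
      rec f g \<in> arr C (prd X NN) Y \<and>
      rec f g \<cdot> pair (idc X) (zero \<cdot> bang X) = f \<and>
      rec f g \<cdot> cross C (idc X) succ = g \<cdot> rec f g \<and>
      (\<forall>h\<in>arr C (prd X NN) Y.
         h \<cdot> pair (idc X) (zero \<cdot> bang X) = f \<and> h \<cdot> cross C (idc X) succ = g \<cdot> h
         \<longrightarrow> h = rec f g)"
    using param_nno unfolding has_param_nno_def by blast
  from this[rule_format, OF _ _ f g] assms show ?thesis
    by simp
qed

lemma rec_ar [simp]:
  assumes "ar f" "ar g" "dm g = cd f" "cd g = cd f"
  shows "ar (rec f g)" "dm (rec f g) = prd (dm f) NN" "cd (rec f g) = cd f"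
  using recursion[OF assms] by (auto simp: arr_def)

lemma rec_zero [simp]:
  assumes "ar f" "ar g" "dm g = cd f" "cd g = cd f" "ar h" "cd h = dm f"
    "ar k" "cd k = tm" "dm k = dm h"
  shows "rec f g \<cdot> pair h (zero \<cdot> k) = f \<cdot> h"
proof -
  have "pair h (zero \<cdot> k) = pair (idc (dm f)) (zero \<cdot> bang (dm f)) \<cdot> h"
    using assms bang_unique[of k] by simp
  then have "rec f g \<cdot> pair h (zero \<cdot> k) = (rec f g \<cdot> pair (idc (dm f)) (zero \<cdot> bang (dm f))) \<cdot> h"
    using assms by simp
  also have "\<dots> = f \<cdot> h"
    using recursion[OF assms(1-4)] by simp
  finally show ?thesis .
qed

lemma rec_succ [simp]:
  assumes "ar f" "ar g" "dm g = cd f" "cd g = cd f" "ar h" "cd h = dm f"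
    "ar k" "cd k = NN" "dm k = dm h"
  shows "rec f g \<cdot> pair h (succ \<cdot> k) = g \<cdot> (rec f g \<cdot> pair h k)"
proof -
  have "pair h (succ \<cdot> k) = pair (pr1 (dm f) NN) (succ \<cdot> pr2 (dm f) NN) \<cdot> pair h k"
    using assms by simp
  then have "rec f g \<cdot> pair h (succ \<cdot> k) =
      (rec f g \<cdot> pair (pr1 (dm f) NN) (succ \<cdot> pr2 (dm f) NN)) \<cdot> pair h k"
    using assms by simp
  also have "\<dots> = (g \<cdot> rec f g) \<cdot> pair h k"
    using recursion[OF assms(1-4)] by simp
  also have "\<dots> = g \<cdot> (rec f g \<cdot> pair h k)"
    using assms by simp
  finally show ?thesis .
qed

lemma rec_unique:
  assumes "ar f" "ar g" "dm g = cd f" "cd g = cd f" "ar h" "dm h = prd (dm f) NN" "cd h = cd f"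
    "h \<cdot> pair (idc (dm f)) (zero \<cdot> bang (dm f)) = f"
    "h \<cdot> pair (pr1 (dm f) NN) (succ \<cdot> pr2 (dm f) NN) = g \<cdot> h"
  shows "h = rec f g"
  using recursion[OF assms(1-4)] assms(5-) by (auto simp: arr_def)

lemma nno_eqI:
  assumes p: "ar p" "dm p = prd X NN"
    and q: "ar q" "dm q = prd X NN" "cd q = cd p"
    and X: "X \<in> Ob"
    and zero: "p \<cdot> pair (idc X) (zero \<cdot> bang X) = q \<cdot> pair (idc X) (zero \<cdot> bang X)"
    and succ: "p \<cdot> pair (pr1 X NN) (succ \<cdot> pr2 X NN) = q \<cdot> pair (pr1 X NN) (succ \<cdot> pr2 X NN)"
  shows "p = q"
proof -
  \<comment> \<open>Both \<open>pair p (idc Z)\<close> and \<open>pair q (idc Z)\<close> are defined by the same recursion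
      on the state \<open>Y \<times> Z\<close>: the successor state is read off the second component alone.\<close>
  define Z where "Z = prd X NN"
  define Y where "Y = cd p"
  define D where "D = pair (pr1 X NN) (succ \<cdot> pr2 X NN)"
  define b where "b = pair (p \<cdot> pair (idc X) (zero \<cdot> bang X)) (pair (idc X) (zero \<cdot> bang X))"
  define t where "t = pair (p \<cdot> D \<cdot> pr2 Y Z) (D \<cdot> pr2 Y Z)"
  have Y: "Y \<in> Ob"
    unfolding Y_def using p by simp
  have D: "ar D" "dm D = Z" "cd D = Z"
    unfolding D_def Z_def using X by auto
  have b: "ar b" "dm b = X" "cd b = prd Y Z"
    unfolding b_def Y_def Z_def using p X by auto
  have t: "ar t" "dm t = prd Y Z" "cd t = prd Y Z"
    unfolding t_def Y_def using p X D Y by (auto simp: Z_def)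
  have "pair p (idc Z) = rec b t"
    by (rule rec_unique) (use p X b t D Y in \<open>auto simp: Y_def Z_def b_def t_def D_def\<close>)
  moreover have "pair q (idc Z) = rec b t"
    by (rule rec_unique) (use p q X b t D Y zero succ in \<open>auto simp: Y_def Z_def b_def t_def D_def\<close>)
  ultimately show ?thesis
    using p q X pr1_pair[of p "idc Z" Y Z] pr1_pair[of q "idc Z" Y Z] by (simp add: Y_def Z_def)
qed

lemma rec_id: "ar b \<Longrightarrow> dm b = X \<Longrightarrow> rec b (idc (cd b)) = b \<cdot> pr1 X NN"
  by (intro rec_unique[symmetric]) auto

definition orbit :: "'o \<Rightarrow> 'a \<Rightarrow> 'a" where
  "orbit Z e = rec (idc Z) e"

lemma orbit_ar [simp]:
  "ar e \<Longrightarrow> dm e = Z \<Longrightarrow> cd e = Z \<Longrightarrow> ar (orbit Z e)"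
  "ar e \<Longrightarrow> dm e = Z \<Longrightarrow> cd e = Z \<Longrightarrow> dm (orbit Z e) = prd Z NN"
  "ar e \<Longrightarrow> dm e = Z \<Longrightarrow> cd e = Z \<Longrightarrow> cd (orbit Z e) = Z"
  by (auto simp: orbit_def)

lemma orbit_shift:
  assumes "ar e" "dm e = Z" "cd e = Z"
  shows "orbit Z e \<cdot> pair (e \<cdot> pr1 Z NN) (pr2 Z NN) = e \<cdot> orbit Z e"
proof -
  have Z: "Z \<in> Ob"
    using assms dom_ob by blast
  have "orbit Z e \<cdot> pair (e \<cdot> pr1 Z NN) (pr2 Z NN) = rec e e"
    by (rule rec_unique) (use assms Z in \<open>simp_all add: orbit_def\<close>)
  moreover have "e \<cdot> orbit Z e = rec e e"
    by (rule rec_unique) (use assms Z in \<open>simp_all add: orbit_def\<close>)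
  ultimately show ?thesis by simp
qed

lemma exp_ob [simp]: "A \<in> Ob \<Longrightarrow> ex A \<in> Ob"
  and ev_ar [simp]: "A \<in> Ob \<Longrightarrow> ar (ev A)" "A \<in> Ob \<Longrightarrow> dm (ev A) = prd (ex A) NN"
    "A \<in> Ob \<Longrightarrow> cd (ev A) = A"
  using exponentiable unfolding nno_exponentiable_def arr_def by blast+

lemma currying:
  assumes "ar f" "dm f = prd X NN" "X \<in> Ob"
  shows "lam X f \<in> arr C X (ex (cd f)) \<and>
      ev (cd f) \<cdot> pair (lam X f \<cdot> pr1 X NN) (pr2 X NN) = f \<and>
      (\<forall>g\<in>arr C X (ex (cd f)). ev (cd f) \<cdot> pair (g \<cdot> pr1 X NN) (pr2 X NN) = f \<longrightarrow> g = lam X f)"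
proof -
  have "f \<in> arr C (prd X NN) (cd f)" "cd f \<in> Ob"
    using assms by (auto simp: arr_def)
  moreover have "\<forall>A\<in>Ob. \<forall>X\<in>Ob. \<forall>f\<in>arr C (prd X NN) A.
      lam X f \<in> arr C X (ex A) \<and>
      ev A \<cdot> cross C (lam X f) (idc NN) = f \<and>
      (\<forall>g\<in>arr C X (ex A). ev A \<cdot> cross C g (idc NN) = f \<longrightarrow> g = lam X f)"
    using exponentiable unfolding nno_exponentiable_def by blast
  ultimately have "lam X f \<in> arr C X (ex (cd f)) \<and>
      ev (cd f) \<cdot> cross C (lam X f) (idc NN) = f \<and>
      (\<forall>g\<in>arr C X (ex (cd f)). ev (cd f) \<cdot> cross C g (idc NN) = f \<longrightarrow> g = lam X f)"
    using assms(3) by blast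
  moreover have "cross C g (idc NN) = pair (g \<cdot> pr1 X NN) (pr2 X NN)"
    if "g \<in> arr C X (ex (cd f))" for g
    using that assms(3) by (simp add: arr_def)
  ultimately show ?thesis by metis
qed

lemma lam_ar [simp]:
  assumes "ar f" "dm f = prd X NN" "X \<in> Ob"
  shows "ar (lam X f)" "dm (lam X f) = X" "cd (lam X f) = ex (cd f)"
  using currying[OF assms] by (auto simp: arr_def)

lemma lam_unique:
  assumes "ar f" "dm f = prd X NN" "X \<in> Ob" "ar g" "dm g = X" "cd g = ex (cd f)"
    "ev (cd f) \<cdot> pair (g \<cdot> pr1 X NN) (pr2 X NN) = f"
  shows "g = lam X f"
  using currying[OF assms(1-3)] assms(4-) by (auto simp: arr_def)

lemma ev_lam [simp]:
  assumes "ar f" "dm f = prd X NN" "X \<in> Ob" "cd f = A" "ar h" "cd h = X"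
    "ar k" "cd k = NN" "dm k = dm h"
  shows "ev A \<cdot> pair (lam X f \<cdot> h) k = f \<cdot> pair h k"
proof -
  have "pair (lam X f \<cdot> h) k = pair (lam X f \<cdot> pr1 X NN) (pr2 X NN) \<cdot> pair h k"
    using assms by simp
  then have "ev A \<cdot> pair (lam X f \<cdot> h) k = ev A \<cdot> (pair (lam X f \<cdot> pr1 X NN) (pr2 X NN) \<cdot> pair h k)"
    by (simp only:)
  also have "\<dots> = (ev A \<cdot> pair (lam X f \<cdot> pr1 X NN) (pr2 X NN)) \<cdot> pair h k"
    using assms by (intro comp_assoc[symmetric]) auto
  also have "\<dots> = f \<cdot> pair h k"
    using currying[OF assms(1-3)] assms by simp
  finally show ?thesis .
qed

lemma ev_lam_id [simp]:
  assumes "ar f" "dm f = prd X NN" "X \<in> Ob" "cd f = A" "ar k" "cd k = NN" "dm k = X"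
  shows "ev A \<cdot> pair (lam X f) k = f \<cdot> pair (idc X) k"
  using ev_lam[of f X A "idc X" k] assms by simp

lemma lam_eta [simp]:
  assumes "ar g" "dm g = X" "cd g = ex A" "A \<in> Ob"
  shows "lam X (ev A \<cdot> pair (g \<cdot> pr1 X NN) (pr2 X NN)) = g"
  using assms by (intro lam_unique[symmetric]) auto

lemma lam_comp [simp]:
  assumes "ar f" "dm f = prd X NN" "X \<in> Ob" "ar h" "cd h = X"
  shows "lam X f \<cdot> h = lam (dm h) (f \<cdot> pair (h \<cdot> pr1 (dm h) NN) (pr2 (dm h) NN))"
  using assms by (intro lam_unique) auto

lemma seq_head_eq [simp]: "seq_head C X A x = ev A \<cdot> pair x (zero \<cdot> bang X)"
  by (simp add: seq_head_def)

lemma seq_shift_eq [simp]: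
  "ar x \<Longrightarrow> dm x = X \<Longrightarrow> seq_shift C X A x = lam X (ev A \<cdot> pair (x \<cdot> pr1 X NN) (succ \<cdot> pr2 X NN))"
  by (simp add: seq_shift_def)

lemma seq_const_eq [simp]: "seq_const C X A x = lam X (x \<cdot> pr1 X NN)"
  by (simp add: seq_const_def)

definition xyy :: "'o \<Rightarrow> 'a \<Rightarrow> 'a \<Rightarrow> 'a" where
  "xyy B x y = pr1 B B \<cdot> rec (pair x y) (pair (pr2 B B) (pr2 B B))"

lemma seq_xy_eq [simp]: "seq_xy C X A x y = lam X (xyy A x y)"
  by (simp add: seq_xy_def xyy_def)

lemma xyy_ar [simp]:
  assumes "ar x" "ar y" "dm x = dm y" "cd x = B" "cd y = B"
  shows "ar (xyy B x y)" "dm (xyy B x y) = prd (dm x) NN" "cd (xyy B x y) = B"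
  using assms by (auto simp: xyy_def)

lemma xyy_zero [simp]:
  assumes "ar x" "ar y" "dm x = dm y" "cd x = B" "cd y = B" "ar h" "cd h = dm x"
    "ar k" "cd k = tm" "dm k = dm h"
  shows "xyy B x y \<cdot> pair h (zero \<cdot> k) = x \<cdot> h"
  using assms cod_ob[OF assms(1)] dom_ob[OF assms(1)] by (simp add: xyy_def)

lemma xyy_succ [simp]:
  assumes "ar x" "ar y" "dm x = dm y" "cd x = B" "cd y = B" "ar h" "cd h = dm x"
    "ar k" "cd k = NN" "dm k = dm h"
  shows "xyy B x y \<cdot> pair h (succ \<cdot> k) = y \<cdot> h"
proof -
  note B = cod_ob[OF assms(1)] and X = dom_ob[OF assms(1)]
  have "pr2 B B \<cdot> rec (pair x y) (pair (pr2 B B) (pr2 B B)) = rec y (idc (cd y))"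
    using assms B by (intro rec_unique) auto
  then have snd: "pr2 B B \<cdot> rec (pair x y) (pair (pr2 B B) (pr2 B B)) = y \<cdot> pr1 (dm x) NN"
    using rec_id[of y "dm x"] assms by simp
  have "xyy B x y \<cdot> pair h (succ \<cdot> k) = pr2 B B \<cdot> rec (pair x y) (pair (pr2 B B) (pr2 B B)) \<cdot> pair h k"
    using assms B X by (simp add: xyy_def)
  also have "\<dots> = (pr2 B B \<cdot> rec (pair x y) (pair (pr2 B B) (pr2 B B))) \<cdot> pair h k"
    using assms B X by simp
  also have "\<dots> = y \<cdot> h"
    using assms B X by (simp add: snd)
  finally show ?thesis .
qed

lemma xyy_same:
  assumes "ar x" "dm x = X" "X \<in> Ob"
  shows "xyy (cd x) x x = x \<cdot> pr1 X NN"
  by (rule nno_eqI[where X = X]) (use assms in simp_all)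

lemma dseq_eq:
  assumes "ar x" "dm x = X" "cd x = ex (ex A)" "X \<in> Ob" "A \<in> Ob"
  shows "dseq C A x = ev A \<cdot> pair ((ev (ex A) \<cdot> pair (x \<cdot> pr1 X NN) (pr2 X NN)) \<cdot> pr1 (prd X NN) NN)
                                (pr2 (prd X NN) NN)"
  using assms by (simp add: dseq_def)

lemma swapN_eq:
  "swapN C X = pair (pair (pr1 X NN \<cdot> pr1 (prd X NN) NN) (pr2 (prd X NN) NN)) (pr2 X NN \<cdot> pr1 (prd X NN) NN)"
  by (simp add: swapN_def Let_def)

lemma swapN_involution: "X \<in> Ob \<Longrightarrow> swapN C X \<cdot> swapN C X = idc (prd (prd X NN) NN)"
  by (simp add: swapN_eq)

subsection \<open>Iterative midpoint objects are supermidpoint objects\<close>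

lemma iterative_iff:
  assumes "ar m" "dm m = prd A A" "cd m = A"
  shows "iterative C A m \<longleftrightarrow>
    (\<forall>Z\<in>Ob. \<forall>a\<in>arr C Z A. \<forall>e\<in>arr C Z Z. \<exists>!u. u \<in> arr C Z A \<and> m \<cdot> pair a (u \<cdot> e) = u)"
proof -
  have A: "A \<in> Ob"
    using assms cod_ob by blast
  have step: "m \<cdot> (cross C (idc A) u \<cdot> pair a e) = m \<cdot> pair a (u \<cdot> e)"
    if "Z \<in> Ob" "a \<in> arr C Z A" "e \<in> arr C Z Z" "u \<in> arr C Z A" for Z a e u
    using that A by (simp add: arr_def)
  have split: "pair (pr1 A Z \<cdot> c) (pr2 A Z \<cdot> c) = c" "pr1 A Z \<cdot> c \<in> arr C Z A"
    "pr2 A Z \<cdot> c \<in> arr C Z Z" if "Z \<in> Ob" "c \<in> arr C Z (prd A Z)" for Z c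
    using that A by (auto simp: arr_def)
  show ?thesis
    unfolding iterative_def
  proof (intro iffI ballI)
    fix Z a e
    assume "\<forall>X\<in>Ob. \<forall>c\<in>arr C X (prd A X). \<exists>!u. u \<in> arr C X A \<and> m \<cdot> (cross C (idc A) u \<cdot> c) = u"
      and "Z \<in> Ob" "a \<in> arr C Z A" "e \<in> arr C Z Z"
    moreover from this have "pair a e \<in> arr C Z (prd A Z)"
      by (simp add: arr_def)
    ultimately show "\<exists>!u. u \<in> arr C Z A \<and> m \<cdot> pair a (u \<cdot> e) = u"
      using step by (smt (verit) bspec)
  next
    fix Z c
    assume "\<forall>Z\<in>Ob. \<forall>a\<in>arr C Z A. \<forall>e\<in>arr C Z Z. \<exists>!u. u \<in> arr C Z A \<and> m \<cdot> pair a (u \<cdot> e) = u"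
      and "Z \<in> Ob" "c \<in> arr C Z (prd A Z)"
    then show "\<exists>!u. u \<in> arr C Z A \<and> m \<cdot> (cross C (idc A) u \<cdot> c) = u"
      using step split by (smt (verit))
  qed
qed

end

locale iterative_midpoint_object = fp_nno_category +
  fixes A m
  assumes iterative_midpoint: "iterative_midpoint C A m"
begin

lemma midpoint: "midpoint_obj C A m"
  and iterative: "iterative C A m"
  using iterative_midpoint unfolding iterative_midpoint_def by auto

lemma obj [simp]: "A \<in> Ob"
  and m_ar [simp]: "ar m" "dm m = prd A A" "cd m = A"
  using midpoint unfolding midpoint_obj_def arr_def by auto

lemma mid_laws:
  assumes "ar x" "cd x = A" "ar y" "cd y = A" "ar z" "cd z = A" "ar w" "cd w = A"
    "dm y = dm x" "dm z = dm x" "dm w = dm x"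
  shows "m \<cdot> pair x x = x" "m \<cdot> pair x y = m \<cdot> pair y x"
    "m \<cdot> pair (m \<cdot> pair x y) (m \<cdot> pair z w) = m \<cdot> pair (m \<cdot> pair x z) (m \<cdot> pair y w)"
proof -
  have "x \<in> arr C (dm x) A" "y \<in> arr C (dm x) A" "z \<in> arr C (dm x) A" "w \<in> arr C (dm x) A"
    using assms by (auto simp: arr_def)
  with midpoint dom_ob[OF assms(1)]
  show "m \<cdot> pair x x = x" "m \<cdot> pair x y = m \<cdot> pair y x"
    "m \<cdot> pair (m \<cdot> pair x y) (m \<cdot> pair z w) = m \<cdot> pair (m \<cdot> pair x z) (m \<cdot> pair y w)"
    unfolding midpoint_obj_def by blast+
qed

lemma mid_idem: "ar x \<Longrightarrow> cd x = A \<Longrightarrow> m \<cdot> pair x x = x"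
  using mid_laws(1)[of x x x x] by simp

lemma mid_comm:
  "ar x \<Longrightarrow> cd x = A \<Longrightarrow> ar y \<Longrightarrow> cd y = A \<Longrightarrow> dm y = dm x \<Longrightarrow> m \<cdot> pair x y = m \<cdot> pair y x"
  using mid_laws(2)[of x y x x] by simp

lemma mid_medial:
  "ar x \<Longrightarrow> cd x = A \<Longrightarrow> ar y \<Longrightarrow> cd y = A \<Longrightarrow> ar z \<Longrightarrow> cd z = A \<Longrightarrow> ar w \<Longrightarrow> cd w = A \<Longrightarrow>
   dm y = dm x \<Longrightarrow> dm z = dm x \<Longrightarrow> dm w = dm x \<Longrightarrow>
   m \<cdot> pair (m \<cdot> pair x y) (m \<cdot> pair z w) = m \<cdot> pair (m \<cdot> pair x z) (m \<cdot> pair y w)"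
  using mid_laws(3)[of x y z w] by simp

lemma fixpoint_ex1:
  assumes "ar a" "dm a = Z" "cd a = A" "ar e" "dm e = Z" "cd e = Z"
  shows "\<exists>!u. u \<in> arr C Z A \<and> m \<cdot> pair a (u \<cdot> e) = u"
proof -
  have "Z \<in> Ob" "a \<in> arr C Z A" "e \<in> arr C Z Z"
    using assms by (auto simp: arr_def)
  then show ?thesis
    using iterative iterative_iff[of m A] by simp
qed

lemma fixpoint_unique:
  assumes "ar a" "dm a = Z" "cd a = A" "ar e" "dm e = Z" "cd e = Z"
    and "ar u" "dm u = Z" "cd u = A" "m \<cdot> pair a (u \<cdot> e) = u"
    and "ar v" "dm v = Z" "cd v = A" "m \<cdot> pair a (v \<cdot> e) = v"
  shows "u = v"
  using fixpoint_ex1[OF assms(1-6)] assms(7-) by (auto simp: arr_def)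

definition head_univ where
  "head_univ = ev A \<cdot> pair (idc (ex A)) (zero \<cdot> bang (ex A))"

definition shift_univ where
  "shift_univ = lam (ex A) (ev A \<cdot> pair (pr1 (ex A) NN) (succ \<cdot> pr2 (ex A) NN))"

lemma head_univ_ar [simp]: "ar head_univ" "dm head_univ = ex A" "cd head_univ = A"
  and shift_univ_ar [simp]: "ar shift_univ" "dm shift_univ = ex A" "cd shift_univ = ex A"
  by (auto simp: head_univ_def shift_univ_def)

lemma head_univ_comp: "ar x \<Longrightarrow> dm x = X \<Longrightarrow> cd x = ex A \<Longrightarrow> head_univ \<cdot> x = seq_head C X A x"
  and shift_univ_comp: "ar x \<Longrightarrow> dm x = X \<Longrightarrow> cd x = ex A \<Longrightarrow> shift_univ \<cdot> x = seq_shift C X A x"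
  by (auto simp: head_univ_def shift_univ_def)

lemma assoc_inf_op_iff:
  "assoc_inf_op C A m M \<longleftrightarrow>
     ar M \<and> dm M = ex A \<and> cd M = A \<and> M = m \<cdot> pair head_univ (M \<cdot> shift_univ)"
proof
  assume M: "assoc_inf_op C A m M"
  then have "ar M" "dm M = ex A" "cd M = A"
    unfolding assoc_inf_op_def arr_def by auto
  moreover have "M \<cdot> idc (ex A) = m \<cdot> pair (seq_head C (ex A) A (idc (ex A))) (M \<cdot> seq_shift C (ex A) A (idc (ex A)))"
    using M id_in_arr[of "ex A"] unfolding assoc_inf_op_def by (simp only: exp_ob obj)
  ultimately show "ar M \<and> dm M = ex A \<and> cd M = A \<and> M = m \<cdot> pair head_univ (M \<cdot> shift_univ)"
    by (simp add: head_univ_def shift_univ_def)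
next
  assume "ar M \<and> dm M = ex A \<and> cd M = A \<and> M = m \<cdot> pair head_univ (M \<cdot> shift_univ)"
  then have M: "ar M" "dm M = ex A" "cd M = A" and eqn: "M = m \<cdot> pair head_univ (M \<cdot> shift_univ)"
    by auto
  show "assoc_inf_op C A m M"
    unfolding assoc_inf_op_def
  proof (intro conjI ballI)
    show "M \<in> arr C (ex A) A"
      using M by (simp add: arr_def)
    fix X x
    assume "X \<in> Ob" "x \<in> arr C X (ex A)"
    then have x: "ar x" "dm x = X" "cd x = ex A"
      by (auto simp: arr_def)
    have "M \<cdot> x = (m \<cdot> pair head_univ (M \<cdot> shift_univ)) \<cdot> x"
      using eqn by simp
    also have "\<dots> = m \<cdot> pair (head_univ \<cdot> x) (M \<cdot> (shift_univ \<cdot> x))"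
      using x M by simp
    also have "\<dots> = m \<cdot> pair (seq_head C X A x) (M \<cdot> seq_shift C X A x)"
      using x by (simp only: head_univ_comp shift_univ_comp)
    finally show "M \<cdot> x = m \<cdot> pair (seq_head C X A x) (M \<cdot> seq_shift C X A x)" .
  qed
qed

theorem assoc_inf_op_ex1: "\<exists>!M. assoc_inf_op C A m M"
proof -
  have "\<exists>!u. (ar u \<and> dm u = ex A \<and> cd u = A) \<and> m \<cdot> pair head_univ (u \<cdot> shift_univ) = u"
    using fixpoint_ex1[OF head_univ_ar shift_univ_ar] by (simp only: arr_def mem_Collect_eq)
  then show ?thesis
    unfolding assoc_inf_op_iff by (metis (no_types, lifting))
qed

end

locale midpoint_inf_op = iterative_midpoint_object +
  fixes M
  assumes assoc: "assoc_inf_op C A m M"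
begin

lemma M_ar [simp]: "ar M" "dm M = ex A" "cd M = A"
  using assoc unfolding assoc_inf_op_def arr_def by auto

lemma inf_op_unfold:
  assumes "ar x" "dm x = X" "cd x = ex A"
  shows "M \<cdot> x = m \<cdot> pair (ev A \<cdot> pair x (zero \<cdot> bang X))
                        (M \<cdot> lam X (ev A \<cdot> pair (x \<cdot> pr1 X NN) (succ \<cdot> pr2 X NN)))"
proof -
  have "X \<in> Ob" "x \<in> arr C X (ex A)"
    using assms by (auto simp: arr_def)
  with assoc assms show ?thesis
    unfolding assoc_inf_op_def by simp
qed

lemma inf_op_lam:
  assumes "ar f" "dm f = prd X NN" "cd f = A" "X \<in> Ob"
    and "f \<cdot> pair (idc X) (zero \<cdot> bang X) = f0"
    and "f \<cdot> pair (pr1 X NN) (succ \<cdot> pr2 X NN) = f'"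
  shows "M \<cdot> lam X f = m \<cdot> pair f0 (M \<cdot> lam X f')"
  using inf_op_unfold[of "lam X f" X] assms by simp

lemma inf_op_const:
  assumes "ar x" "dm x = X" "cd x = A" "X \<in> Ob"
  shows "M \<cdot> lam X (x \<cdot> pr1 X NN) = x"
proof (rule fixpoint_unique[of x X "idc X"])
  have "M \<cdot> lam X (x \<cdot> pr1 X NN) = m \<cdot> pair x (M \<cdot> lam X (x \<cdot> pr1 X NN))"
    by (rule inf_op_lam) (use assms in simp_all)
  then show "m \<cdot> pair x ((M \<cdot> lam X (x \<cdot> pr1 X NN)) \<cdot> idc X) = M \<cdot> lam X (x \<cdot> pr1 X NN)"
    using assms by simp
  show "m \<cdot> pair x (x \<cdot> idc X) = x"
    using assms mid_idem[of x] by simp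
qed (use assms in simp_all)

lemma inf_op_xyy:
  assumes "ar x" "dm x = X" "cd x = A" "ar y" "dm y = X" "cd y = A" "X \<in> Ob"
  shows "M \<cdot> lam X (xyy A x y) = m \<cdot> pair x y"
proof -
  have "M \<cdot> lam X (xyy A x y) = m \<cdot> pair x (M \<cdot> lam X (y \<cdot> pr1 X NN))"
    by (rule inf_op_lam) (use assms in simp_all)
  then show ?thesis
    using inf_op_const[of y X] assms by simp
qed

lemma inf_op_mid_univ:
  defines "U \<equiv> ex A"
  defines "Z \<equiv> prd U U"
  defines "p0 \<equiv> ev A \<cdot> pair (pr1 U U \<cdot> pr1 Z NN) (pr2 Z NN)"
  defines "q0 \<equiv> ev A \<cdot> pair (pr2 U U \<cdot> pr1 Z NN) (pr2 Z NN)"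
  shows "M \<cdot> lam Z (m \<cdot> pair p0 q0) = m \<cdot> pair (M \<cdot> pr1 U U) (M \<cdot> pr2 U U)"
    (is "?L = ?R")
proof -
  \<comment> \<open>Both sides are fixed points of \<open>u \<mapsto> m(a, u \<cdot> e)\<close>, where \<open>e\<close> shifts both
      sequences; for the right-hand side this is the medial law.\<close>
  have U: "U \<in> Ob" "Z \<in> Ob"
    unfolding U_def Z_def by auto
  define sh where "sh = lam U (ev A \<cdot> pair (pr1 U NN) (succ \<cdot> pr2 U NN))"
  have sh: "ar sh" "dm sh = U" "cd sh = U"
    unfolding sh_def using U by (auto simp: U_def)
  define e where "e = pair (sh \<cdot> pr1 U U) (sh \<cdot> pr2 U U)"
  define a where "a = m \<cdot> pair (ev A \<cdot> pair (pr1 U U) (zero \<cdot> bang Z)) (ev A \<cdot> pair (pr2 U U) (zero \<cdot> bang Z))"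
  have e: "ar e" "dm e = Z" "cd e = Z"
    unfolding e_def using U sh by (auto simp: Z_def)
  have a: "ar a" "dm a = Z" "cd a = A"
    unfolding a_def using U by (auto simp: Z_def U_def)
  have p0: "ar p0" "dm p0 = prd Z NN" "cd p0 = A" and q0: "ar q0" "dm q0 = prd Z NN" "cd q0 = A"
    unfolding p0_def q0_def using U by (auto simp: Z_def U_def)
  have L: "ar ?L" "dm ?L = Z" "cd ?L = A"
    using U p0 q0 by (auto simp: U_def)
  have R: "ar ?R" "dm ?R = Z" "cd ?R = A"
    using U by (auto simp: U_def Z_def)
  have "?L = m \<cdot> pair a (M \<cdot> lam Z ((m \<cdot> pair p0 q0) \<cdot> pair (pr1 Z NN) (succ \<cdot> pr2 Z NN)))"
    by (rule inf_op_lam) (use U p0 q0 in \<open>simp_all add: a_def p0_def q0_def Z_def U_def\<close>)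
  also have "M \<cdot> lam Z ((m \<cdot> pair p0 q0) \<cdot> pair (pr1 Z NN) (succ \<cdot> pr2 Z NN)) = ?L \<cdot> e"
    using U p0 q0 e by (simp add: e_def sh_def p0_def q0_def Z_def U_def)
  finally have L_fix: "m \<cdot> pair a (?L \<cdot> e) = ?L" ..
  have unfold1: "M \<cdot> pr1 U U = m \<cdot> pair (ev A \<cdot> pair (pr1 U U) (zero \<cdot> bang Z)) (M \<cdot> (sh \<cdot> pr1 U U))"
    using inf_op_unfold[of "pr1 U U" Z] U by (simp add: sh_def Z_def U_def)
  have unfold2: "M \<cdot> pr2 U U = m \<cdot> pair (ev A \<cdot> pair (pr2 U U) (zero \<cdot> bang Z)) (M \<cdot> (sh \<cdot> pr2 U U))"
    using inf_op_unfold[of "pr2 U U" Z] U by (simp add: sh_def Z_def U_def)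
  have "?R = m \<cdot> pair (m \<cdot> pair (ev A \<cdot> pair (pr1 U U) (zero \<cdot> bang Z)) (M \<cdot> (sh \<cdot> pr1 U U)))
                      (m \<cdot> pair (ev A \<cdot> pair (pr2 U U) (zero \<cdot> bang Z)) (M \<cdot> (sh \<cdot> pr2 U U)))"
    by (subst unfold1, subst unfold2, rule refl)
  also have "\<dots> = m \<cdot> pair a (m \<cdot> pair (M \<cdot> (sh \<cdot> pr1 U U)) (M \<cdot> (sh \<cdot> pr2 U U)))"
    unfolding a_def by (rule mid_medial) (use U sh in \<open>simp_all add: Z_def U_def\<close>)
  also have "m \<cdot> pair (M \<cdot> (sh \<cdot> pr1 U U)) (M \<cdot> (sh \<cdot> pr2 U U)) = ?R \<cdot> e"
    unfolding e_def using U sh by (simp add: Z_def U_def)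
  finally have R_fix: "m \<cdot> pair a (?R \<cdot> e) = ?R" ..
  show ?thesis
    by (rule fixpoint_unique[OF a e L L_fix R R_fix])
qed

lemma inf_op_mid:
  assumes "ar p" "dm p = prd X NN" "cd p = A" "ar q" "dm q = prd X NN" "cd q = A" "X \<in> Ob"
  shows "M \<cdot> lam X (m \<cdot> pair p q) = m \<cdot> pair (M \<cdot> lam X p) (M \<cdot> lam X q)"
proof -
  define U where "U = ex A"
  define Z where "Z = prd U U"
  have U: "U \<in> Ob" "Z \<in> Ob"
    unfolding U_def Z_def by auto
  define h where "h = pair (lam X p) (lam X q)"
  have h: "ar h" "dm h = X" "cd h = Z"
    unfolding h_def Z_def U_def using assms by auto
  have "(M \<cdot> lam Z (m \<cdot> pair (ev A \<cdot> pair (pr1 U U \<cdot> pr1 Z NN) (pr2 Z NN))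
                                (ev A \<cdot> pair (pr2 U U \<cdot> pr1 Z NN) (pr2 Z NN)))) \<cdot> h
      = (m \<cdot> pair (M \<cdot> pr1 U U) (M \<cdot> pr2 U U)) \<cdot> h"
    using inf_op_mid_univ unfolding U_def Z_def by simp
  then show ?thesis
    using assms h U unfolding h_def by (simp add: Z_def U_def)
qed

lemma inf_op_swap_univ:
  defines "UU \<equiv> ex (ex A)"
  defines "W \<equiv> prd UU NN"
  shows "M \<cdot> lam UU (M \<cdot> lam W (dseq C A (idc UU))) =
         M \<cdot> lam UU (M \<cdot> lam W (dseq C A (idc UU) \<cdot> swapN C UU))"
    (is "?L = ?R")
proof -
  \<comment> \<open>Unfolding \<open>M\<close> along either index shows that both sides are fixed points of
      \<open>u \<mapsto> m(a, u \<cdot> e)\<close>, where \<open>a\<close> is \<open>M\<close> of the first row and \<open>e\<close> drops that row;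
      on the swapped side the outer \<open>M\<close> must be pushed through \<open>m\<close> by \<open>inf_op_mid\<close>.\<close>
  have U: "UU \<in> Ob" "W \<in> Ob"
    unfolding UU_def W_def by auto
  define a where "a = M \<cdot> (ev (ex A) \<cdot> pair (idc UU) (zero \<cdot> bang UU))"
  define e where "e = lam UU (ev (ex A) \<cdot> pair (pr1 UU NN) (succ \<cdot> pr2 UU NN))"
  have a: "ar a" "dm a = UU" "cd a = A"
    unfolding a_def using U by (auto simp: UU_def)
  have e: "ar e" "dm e = UU" "cd e = UU"
    unfolding e_def using U by (auto simp: UU_def)
  have L_eq: "?L = M \<cdot> lam UU (M \<cdot> ev (ex A))"
    using U by (simp add: dseq_eq UU_def W_def)
  have L: "ar ?L" "dm ?L = UU" "cd ?L = A"
    unfolding L_eq using U by (auto simp: UU_def)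
  have "?L = m \<cdot> pair a (M \<cdot> lam UU (M \<cdot> ev (ex A) \<cdot> pair (pr1 UU NN) (succ \<cdot> pr2 UU NN)))"
    unfolding L_eq by (rule inf_op_lam) (use U in \<open>simp_all add: a_def UU_def\<close>)
  also have "M \<cdot> lam UU (M \<cdot> ev (ex A) \<cdot> pair (pr1 UU NN) (succ \<cdot> pr2 UU NN)) = ?L \<cdot> e"
    unfolding L_eq e_def using U by (simp add: UU_def)
  finally have L_fix: "m \<cdot> pair a (?L \<cdot> e) = ?L" ..
  define B where "B = dseq C A (idc UU) \<cdot> swapN C UU"
  have B: "ar B" "dm B = prd W NN" "cd B = A"
    unfolding B_def using U by (auto simp: dseq_eq swapN_eq UU_def W_def)
  have R: "ar ?R" "dm ?R = UU" "cd ?R = A"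
    unfolding B_def[symmetric] using U B by (auto simp: UU_def W_def)
  have "M \<cdot> lam W B = m \<cdot> pair (B \<cdot> pair (idc W) (zero \<cdot> bang W))
                               (M \<cdot> lam W (B \<cdot> pair (pr1 W NN) (succ \<cdot> pr2 W NN)))"
    by (rule inf_op_lam) (use U B in simp_all)
  then have "?R = M \<cdot> lam UU (m \<cdot> pair (B \<cdot> pair (idc W) (zero \<cdot> bang W))
                                     (M \<cdot> lam W (B \<cdot> pair (pr1 W NN) (succ \<cdot> pr2 W NN))))"
    unfolding B_def by simp
  also have "\<dots> = m \<cdot> pair (M \<cdot> lam UU (B \<cdot> pair (idc W) (zero \<cdot> bang W)))
                          (M \<cdot> lam UU (M \<cdot> lam W (B \<cdot> pair (pr1 W NN) (succ \<cdot> pr2 W NN))))"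
    by (rule inf_op_mid) (use U B in \<open>simp_all add: W_def\<close>)
  also have "lam UU (B \<cdot> pair (idc W) (zero \<cdot> bang W)) = ev (ex A) \<cdot> pair (idc UU) (zero \<cdot> bang UU)"
    by (rule lam_unique[symmetric]) (use U B in \<open>simp_all add: W_def UU_def B_def dseq_eq swapN_eq\<close>)
  also have "M \<cdot> lam UU (M \<cdot> lam W (B \<cdot> pair (pr1 W NN) (succ \<cdot> pr2 W NN))) = ?R \<cdot> e"
    unfolding e_def B_def using U by (simp add: W_def UU_def dseq_eq swapN_eq)
  finally have R_fix: "m \<cdot> pair a (?R \<cdot> e) = ?R"
    unfolding a_def ..
  show ?thesis
    by (rule fixpoint_unique[OF a e L L_fix R R_fix])
qed

lemma inf_op_swap:
  assumes "ar x" "dm x = X" "cd x = ex (ex A)" "X \<in> Ob"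
  shows "M \<cdot> lam X (M \<cdot> lam (prd X NN) (dseq C A x)) =
         M \<cdot> lam X (M \<cdot> lam (prd X NN) (dseq C A x \<cdot> swapN C X))"
proof -
  define UU where "UU = ex (ex A)"
  define W where "W = prd UU NN"
  have U: "UU \<in> Ob" "W \<in> Ob"
    unfolding UU_def W_def by auto
  have "lam (prd X NN) (dseq C A x) = ev (ex A) \<cdot> pair (x \<cdot> pr1 X NN) (pr2 X NN)"
    by (rule lam_unique[symmetric]) (use assms in \<open>simp_all add: dseq_eq\<close>)
  then have "M \<cdot> lam X (M \<cdot> lam (prd X NN) (dseq C A x)) =
      (M \<cdot> lam UU (M \<cdot> lam W (dseq C A (idc UU)))) \<cdot> x"
    using assms U by (simp add: dseq_eq UU_def W_def)
  also have "\<dots> = (M \<cdot> lam UU (M \<cdot> lam W (dseq C A (idc UU) \<cdot> swapN C UU))) \<cdot> x"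
    unfolding UU_def W_def inf_op_swap_univ ..
  also have "\<dots> = M \<cdot> lam X (M \<cdot> lam (prd X NN) (dseq C A x \<cdot> swapN C X))"
    using assms U by (simp add: dseq_eq swapN_eq UU_def W_def)
  finally show ?thesis .
qed

theorem inf_op_supermidpoint: "supermidpoint C A M"
  unfolding supermidpoint_def
proof (intro conjI ballI)
  show "A \<in> Ob" "M \<in> arr C (ex A) A"
    by (simp_all add: arr_def)
  fix X
  assume X: "X \<in> Ob"
  show "M \<cdot> seq_const C X A x = x" if "x \<in> arr C X A" for x
    using inf_op_const[of x X] that X by (simp add: arr_def)
  show "M \<cdot> seq_xy C X A x y = M \<cdot> seq_xy C X A y x" if "x \<in> arr C X A" "y \<in> arr C X A" for x y
    using inf_op_xyy[of x X y] inf_op_xyy[of y X x] mid_comm[of x y] that X by (simp add: arr_def)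
  show "M \<cdot> lam X (M \<cdot> lam (prd X NN) (dseq C A x)) =
        M \<cdot> lam X (M \<cdot> lam (prd X NN) (dseq C A x \<cdot> swapN C X))" if "x \<in> arr C X (ex (ex A))" for x
    using inf_op_swap[of x X] that X by (simp add: arr_def)
  show "M \<cdot> x = M \<cdot> seq_xy C X A (seq_head C X A x) (M \<cdot> seq_shift C X A x)"
    if "x \<in> arr C X (ex A)" for x
  proof -
    have x: "ar x" "dm x = X" "cd x = ex A"
      using that by (auto simp: arr_def)
    have "M \<cdot> seq_xy C X A (seq_head C X A x) (M \<cdot> seq_shift C X A x) =
        m \<cdot> pair (seq_head C X A x) (M \<cdot> seq_shift C X A x)"
      using inf_op_xyy[of "seq_head C X A x" X "M \<cdot> seq_shift C X A x"] x X by simp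
    also have "\<dots> = M \<cdot> x"
      using assoc that X unfolding assoc_inf_op_def by simp
    finally show ?thesis ..
  qed
qed

lemma supermid_binop_inf_op: "supermid_binop C A M = m"
proof -
  have "supermid_binop C A M = M \<cdot> lam (prd A A) (xyy A (pr1 A A) (pr2 A A))"
    unfolding supermid_binop_def by simp
  also have "\<dots> = m \<cdot> pair (pr1 A A) (pr2 A A)"
    by (rule inf_op_xyy) auto
  finally show ?thesis
    by simp
qed

end

subsection \<open>Cancellative supermidpoint objects are m-convex bodies\<close>

locale supermidpoint_object = fp_nno_category +
  fixes A M
  assumes supermidpoint: "supermidpoint C A M"
begin

abbreviation m where "m \<equiv> supermid_binop C A M"

lemma obj [simp]: "A \<in> Ob"
  and M_ar [simp]: "ar M" "dm M = ex A" "cd M = A"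
  using supermidpoint unfolding supermidpoint_def arr_def by auto

lemma m_ar [simp]: "ar m" "dm m = prd A A" "cd m = A"
  unfolding supermid_binop_def by auto

lemma supermidpoint_laws:
  assumes "X \<in> Ob"
  shows "x \<in> arr C X A \<Longrightarrow> M \<cdot> seq_const C X A x = x"
    "x \<in> arr C X A \<Longrightarrow> y \<in> arr C X A \<Longrightarrow> M \<cdot> seq_xy C X A x y = M \<cdot> seq_xy C X A y x"
    "x \<in> arr C X (ex (ex A)) \<Longrightarrow>
       M \<cdot> lam X (M \<cdot> lam (prd X NN) (dseq C A x)) = M \<cdot> lam X (M \<cdot> lam (prd X NN) (dseq C A x \<cdot> swapN C X))"
    "x \<in> arr C X (ex A) \<Longrightarrow> M \<cdot> x = M \<cdot> seq_xy C X A (seq_head C X A x) (M \<cdot> seq_shift C X A x)"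
  using supermidpoint assms unfolding supermidpoint_def by blast+

lemma M_const:
  "ar x \<Longrightarrow> dm x = X \<Longrightarrow> cd x = A \<Longrightarrow> X \<in> Ob \<Longrightarrow> M \<cdot> lam X (x \<cdot> pr1 X NN) = x"
  using supermidpoint_laws(1)[of X x] by (simp add: arr_def)

lemma M_xyy_comm:
  "ar x \<Longrightarrow> dm x = X \<Longrightarrow> cd x = A \<Longrightarrow> ar y \<Longrightarrow> dm y = X \<Longrightarrow> cd y = A \<Longrightarrow> X \<in> Ob \<Longrightarrow>
   M \<cdot> lam X (xyy A x y) = M \<cdot> lam X (xyy A y x)"
  using supermidpoint_laws(2)[of X x y] by (simp add: arr_def)

lemma M_swap:
  "ar x \<Longrightarrow> dm x = X \<Longrightarrow> cd x = ex (ex A) \<Longrightarrow> X \<in> Ob \<Longrightarrow>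
   M \<cdot> lam X (M \<cdot> lam (prd X NN) (dseq C A x)) = M \<cdot> lam X (M \<cdot> lam (prd X NN) (dseq C A x \<cdot> swapN C X))"
  using supermidpoint_laws(3)[of X x] by (simp add: arr_def)

lemma M_unfold:
  "ar x \<Longrightarrow> dm x = X \<Longrightarrow> cd x = ex A \<Longrightarrow> X \<in> Ob \<Longrightarrow>
   M \<cdot> x = M \<cdot> seq_xy C X A (seq_head C X A x) (M \<cdot> seq_shift C X A x)"
  using supermidpoint_laws(4)[of X x] by (simp add: arr_def)

lemma m_pair:
  assumes "ar x" "dm x = X" "cd x = A" "ar y" "dm y = X" "cd y = A" "X \<in> Ob"
  shows "m \<cdot> pair x y = M \<cdot> lam X (xyy A x y)"
proof -
  have "xyy A (pr1 A A) (pr2 A A) \<cdot> pair (pair x y \<cdot> pr1 X NN) (pr2 X NN) = xyy A x y"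
    by (rule nno_eqI[where X = X]) (use assms in simp_all)
  then show ?thesis
    unfolding supermid_binop_def using assms by simp
qed

lemma m_idem:
  assumes "ar x" "dm x = X" "cd x = A" "X \<in> Ob"
  shows "m \<cdot> pair x x = x"
  using m_pair[of x X x] xyy_same[of x X] M_const[of x X] assms by simp

lemma m_comm:
  assumes "ar x" "dm x = X" "cd x = A" "ar y" "dm y = X" "cd y = A" "X \<in> Ob"
  shows "m \<cdot> pair x y = m \<cdot> pair y x"
  using m_pair[of x X y] m_pair[of y X x] M_xyy_comm[of x X y] assms by simp

lemma M_mid:
  assumes p: "ar p" "dm p = prd X NN" "cd p = A"
    and q: "ar q" "dm q = prd X NN" "cd q = A"
    and X: "X \<in> Ob"
  shows "M \<cdot> lam X (m \<cdot> pair p q) = m \<cdot> pair (M \<cdot> lam X p) (M \<cdot> lam X q)"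
proof -
  \<comment> \<open>Apply the exchange law to the double sequence whose rows are \<open>(p\<^sub>i, q\<^sub>i, q\<^sub>i, \<dots>)\<close>.\<close>
  define Y where "Y = prd X NN"
  have Y: "Y \<in> Ob"
    unfolding Y_def using X by simp
  define rows where "rows = lam X (lam Y (xyy A p q))"
  have rows: "ar rows" "dm rows = X" "cd rows = ex (ex A)"
    unfolding rows_def Y_def using p q X by auto
  have rows_dseq: "dseq C A rows = xyy A p q"
    unfolding rows_def Y_def using p q X by (simp add: dseq_eq)
  have M_rows: "M \<cdot> lam Y (xyy A p q) = m \<cdot> pair p q"
    using m_pair[of p Y q] p q Y unfolding Y_def by simp
  define cols where "cols = ev A \<cdot> pair (xyy (ex A) (lam X p) (lam X q) \<cdot> pr1 Y NN) (pr2 Y NN)"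
  have cols: "ar cols" "dm cols = prd Y NN" "cd cols = A"
    unfolding cols_def Y_def using p q X by auto
  have cols_swap: "cols \<cdot> swapN C X = xyy A p q"
    by (rule nno_eqI[where X = Y]) (use p q X in \<open>simp_all add: cols_def Y_def swapN_eq\<close>)
  have "cols = cols \<cdot> (swapN C X \<cdot> swapN C X)"
    using swapN_involution[OF X] cols by (simp add: Y_def)
  also have "\<dots> = (cols \<cdot> swapN C X) \<cdot> swapN C X"
    using cols X by (simp add: swapN_eq Y_def)
  finally have "cols = xyy A p q \<cdot> swapN C X"
    unfolding cols_swap .
  then have cols_lam: "lam Y (xyy A p q \<cdot> swapN C X) = xyy (ex A) (lam X p) (lam X q)"
    by (intro lam_unique[symmetric]) (use p q X cols in \<open>simp_all add: cols_def Y_def swapN_eq\<close>)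
  have M_cols: "M \<cdot> xyy (ex A) (lam X p) (lam X q) = xyy A (M \<cdot> lam X p) (M \<cdot> lam X q)"
    by (rule nno_eqI[where X = X]) (use p q X in simp_all)
  have "M \<cdot> lam X (m \<cdot> pair p q) = M \<cdot> lam X (M \<cdot> lam Y (dseq C A rows))"
    unfolding rows_dseq M_rows ..
  also have "\<dots> = M \<cdot> lam X (M \<cdot> lam Y (dseq C A rows \<cdot> swapN C X))"
    using M_swap[OF rows X] unfolding Y_def .
  also have "\<dots> = M \<cdot> lam X (xyy A (M \<cdot> lam X p) (M \<cdot> lam X q))"
    unfolding rows_dseq cols_lam M_cols ..
  also have "\<dots> = m \<cdot> pair (M \<cdot> lam X p) (M \<cdot> lam X q)"
    using m_pair[of "M \<cdot> lam X p" X "M \<cdot> lam X q"] p q X by simp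
  finally show ?thesis .
qed

lemma m_medial:
  assumes x: "ar x" "dm x = X" "cd x = A" and y: "ar y" "dm y = X" "cd y = A"
    and z: "ar z" "dm z = X" "cd z = A" and w: "ar w" "dm w = X" "cd w = A"
    and X: "X \<in> Ob"
  shows "m \<cdot> pair (m \<cdot> pair x y) (m \<cdot> pair z w) = m \<cdot> pair (m \<cdot> pair x z) (m \<cdot> pair y w)"
proof -
  have xyy_m: "m \<cdot> pair (xyy A x z) (xyy A y w) = xyy A (m \<cdot> pair x y) (m \<cdot> pair z w)"
    by (rule nno_eqI[where X = X]) (use x y z w X in simp_all)
  have "m \<cdot> pair (m \<cdot> pair x y) (m \<cdot> pair z w) = M \<cdot> lam X (xyy A (m \<cdot> pair x y) (m \<cdot> pair z w))"
    by (rule m_pair) (use x y z w X in simp_all)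
  also have "\<dots> = M \<cdot> lam X (m \<cdot> pair (xyy A x z) (xyy A y w))"
    unfolding xyy_m ..
  also have "\<dots> = m \<cdot> pair (M \<cdot> lam X (xyy A x z)) (M \<cdot> lam X (xyy A y w))"
    by (rule M_mid) (use x y z w X in simp_all)
  also have "\<dots> = m \<cdot> pair (m \<cdot> pair x z) (m \<cdot> pair y w)"
    using m_pair[of x X z] m_pair[of y X w] x y z w X by simp
  finally show ?thesis .
qed

theorem supermidpoint_midpoint_obj: "midpoint_obj C A m"
  unfolding midpoint_obj_def
proof (intro conjI ballI)
  show "A \<in> Ob" "m \<in> arr C (prd A A) A"
    by (simp_all add: arr_def)
  fix X x y z w
  assume X: "X \<in> Ob" and "x \<in> arr C X A" "y \<in> arr C X A" "z \<in> arr C X A" "w \<in> arr C X A"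
  then have x: "ar x" "dm x = X" "cd x = A" and y: "ar y" "dm y = X" "cd y = A"
    and z: "ar z" "dm z = X" "cd z = A" and w: "ar w" "dm w = X" "cd w = A"
    by (auto simp: arr_def)
  show "m \<cdot> pair x x = x"
    by (rule m_idem[OF x X])
  show "m \<cdot> pair x y = m \<cdot> pair y x"
    by (rule m_comm[OF x y X])
  show "m \<cdot> pair (m \<cdot> pair x y) (m \<cdot> pair z w) = m \<cdot> pair (m \<cdot> pair x z) (m \<cdot> pair y w)"
    by (rule m_medial[OF x y z w X])
qed

lemma orbit_seq:
  assumes f: "ar f" "dm f = Z" "cd f = A" and e: "ar e" "dm e = Z" "cd e = Z"
  shows "seq_head C Z A (lam Z (f \<cdot> orbit Z e)) = f"
    "seq_shift C Z A (lam Z (f \<cdot> orbit Z e)) = lam Z (f \<cdot> orbit Z e) \<cdot> e"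
proof -
  have Z: "Z \<in> Ob"
    using e dom_ob by blast
  show "seq_head C Z A (lam Z (f \<cdot> orbit Z e)) = f"
    using f e Z by (simp add: orbit_def)
  show "seq_shift C Z A (lam Z (f \<cdot> orbit Z e)) = lam Z (f \<cdot> orbit Z e) \<cdot> e"
    using f e Z orbit_shift[OF e] by (simp add: orbit_def)
qed

lemma orbit_fixpoint:
  assumes a: "ar a" "dm a = Z" "cd a = A" and e: "ar e" "dm e = Z" "cd e = Z"
  shows "m \<cdot> pair a ((M \<cdot> lam Z (a \<cdot> orbit Z e)) \<cdot> e) = M \<cdot> lam Z (a \<cdot> orbit Z e)"
proof -
  define s where "s = lam Z (a \<cdot> orbit Z e)"
  have Z: "Z \<in> Ob"
    using e dom_ob by blast
  have s: "ar s" "dm s = Z" "cd s = ex A"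
    unfolding s_def using a e Z by auto
  have "M \<cdot> s = M \<cdot> seq_xy C Z A (seq_head C Z A s) (M \<cdot> seq_shift C Z A s)"
    by (rule M_unfold[OF s Z])
  also have "\<dots> = m \<cdot> pair a ((M \<cdot> s) \<cdot> e)"
    unfolding s_def orbit_seq[OF a e] using m_pair[of a Z "(M \<cdot> s) \<cdot> e"] a e s Z
    by (simp add: s_def)
  finally show ?thesis
    unfolding s_def ..
qed

lemma orbit_fixpoint_unique:
  assumes cancel: "cancellative C A m"
    and a: "ar a" "dm a = Z" "cd a = A" and e: "ar e" "dm e = Z" "cd e = Z"
    and u: "ar u" "dm u = Z" "cd u = A" and u_fix: "m \<cdot> pair a (u \<cdot> e) = u"
  shows "u = M \<cdot> lam Z (a \<cdot> orbit Z e)"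
proof -
  \<comment> \<open>Evaluate \<open>M\<close> on \<open>(u, u e, u e\<^sup>2, \<dots>)\<close> once by the unfolding law and once termwise
      through \<open>u = m(a, u e)\<close>; the two results share the second argument, which cancels.\<close>
  define s where "s = lam Z (a \<cdot> orbit Z e)"
  define y where "y = lam Z (u \<cdot> orbit Z e)"
  define t where "t = M \<cdot> lam Z (u \<cdot> (e \<cdot> orbit Z e))"
  have Z: "Z \<in> Ob"
    using e dom_ob by blast
  have s: "ar s" "dm s = Z" "cd s = ex A" and y: "ar y" "dm y = Z" "cd y = ex A"
    and t: "ar t" "dm t = Z" "cd t = A"
    unfolding s_def y_def t_def using a e u Z by auto
  have Ms: "ar (M \<cdot> s)" "dm (M \<cdot> s) = Z" "cd (M \<cdot> s) = A"
    using s by auto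
  have "M \<cdot> y = M \<cdot> seq_xy C Z A (seq_head C Z A y) (M \<cdot> seq_shift C Z A y)"
    by (rule M_unfold[OF y Z])
  also have "\<dots> = m \<cdot> pair u t"
    unfolding y_def orbit_seq[OF u(1-3) e] using m_pair[of u Z t] u e t Z
    by (simp add: t_def orbit_shift[OF e])
  finally have head_first: "M \<cdot> y = m \<cdot> pair u t" .
  have "u \<cdot> orbit Z e = (m \<cdot> pair a (u \<cdot> e)) \<cdot> orbit Z e"
    using u_fix by simp
  also have "\<dots> = m \<cdot> pair (a \<cdot> orbit Z e) (u \<cdot> (e \<cdot> orbit Z e))"
    using u a e by simp
  finally have "M \<cdot> y = M \<cdot> lam Z (m \<cdot> pair (a \<cdot> orbit Z e) (u \<cdot> (e \<cdot> orbit Z e)))"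
    unfolding y_def by simp
  also have "\<dots> = m \<cdot> pair (M \<cdot> s) t"
    unfolding s_def t_def by (rule M_mid) (use u a e Z in simp_all)
  finally have termwise: "M \<cdot> y = m \<cdot> pair (M \<cdot> s) t" .
  have "m \<cdot> pair t u = m \<cdot> pair t (M \<cdot> s)"
    using head_first termwise m_comm[of u Z t] m_comm[of "M \<cdot> s" Z t] u t Ms Z by simp
  moreover have "t \<in> arr C Z A" "u \<in> arr C Z A" "M \<cdot> s \<in> arr C Z A"
    using t u Ms by (auto simp: arr_def)
  ultimately show ?thesis
    using cancel Z unfolding cancellative_def s_def by blast
qed

theorem cancellative_iterative:
  assumes "cancellative C A m"
  shows "iterative C A m"
  unfolding iterative_iff[OF m_ar]
proof (intro ballI)
  fix Z a e
  assume "Z \<in> Ob" "a \<in> arr C Z A" "e \<in> arr C Z Z"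
  then have a: "ar a" "dm a = Z" "cd a = A" and e: "ar e" "dm e = Z" "cd e = Z"
    by (auto simp: arr_def)
  show "\<exists>!u. u \<in> arr C Z A \<and> m \<cdot> pair a (u \<cdot> e) = u"
  proof (rule ex1I)
    show "M \<cdot> lam Z (a \<cdot> orbit Z e) \<in> arr C Z A \<and>
        m \<cdot> pair a ((M \<cdot> lam Z (a \<cdot> orbit Z e)) \<cdot> e) = M \<cdot> lam Z (a \<cdot> orbit Z e)"
      using orbit_fixpoint[OF a e] a e by (auto simp: arr_def)
    show "u = M \<cdot> lam Z (a \<cdot> orbit Z e)" if "u \<in> arr C Z A \<and> m \<cdot> pair a (u \<cdot> e) = u" for u
      using orbit_fixpoint_unique[OF assms a e] that by (auto simp: arr_def)
  qed
qed

end

theorem mainTheorem2: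
  fixes C :: "('o, 'a) fpcat"
  assumes "fp_nno_cat C"
  shows "(\<forall>A m. iterative_midpoint C A m \<longrightarrow>
            (\<exists>!M. assoc_inf_op C A m M) \<and>
            (\<forall>M. assoc_inf_op C A m M \<longrightarrow>
                 supermidpoint C A M \<and>
                 (cancellative C A m \<longrightarrow> cancellative_supermidpoint C A M)))
       \<and> (\<forall>A M. cancellative_supermidpoint C A M \<longrightarrow>
                 m_convex_body C A (supermid_binop C A M))"
proof (intro conjI allI impI)
  fix A m
  assume "iterative_midpoint C A m"
  then interpret iterative_midpoint_object C A m
    using assms by unfold_locales
  show "\<exists>!M. assoc_inf_op C A m M"
    by (rule assoc_inf_op_ex1)
  fix M
  assume "assoc_inf_op C A m M"
  then interpret midpoint_inf_op C A m M
    by unfold_locales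
  show "supermidpoint C A M"
    by (rule inf_op_supermidpoint)
  then show "cancellative C A m \<Longrightarrow> cancellative_supermidpoint C A M"
    unfolding cancellative_supermidpoint_def supermid_binop_inf_op by simp
next
  fix A M
  assume canc: "cancellative_supermidpoint C A M"
  then interpret supermidpoint_object C A M
    using assms unfolding cancellative_supermidpoint_def by unfold_locales auto
  show "m_convex_body C A (supermid_binop C A M)"
    using canc supermidpoint_midpoint_obj cancellative_iterative
    unfolding m_convex_body_def cancellative_supermidpoint_def by blast
qed

end
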